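(* Let $k\ge 2$ and $n_1,\dots,n_k\ge 1$, let $n=n_1+\cdots+n_k$, and let $\Gamma=K_{1,k-1}[K_{n_1},K_{n_2},\dots,K_{n_k}]$, where $K_{n_1}$ replaces the center of the star $K_{1,k-1}$ and $K_{n_2},\dots,K_{n_k}$ replace its leaves. Put $d_1=n-1$ and $d_i=n_1+n_i-1$ for $2\le i\le k$. Then \[\chi(S(\Gamma),x)=\prod_{i=1}^{k}\left(x+\sqrt{2}d_i\right)^{n_i-1}\left(\prod_{i=1}^{k}\big(x-(n_i-1)\sqrt{2}d_i\big)-\sum_{j=2}^{k}n_1n_j(d_1^2+d_j^2)\prod_{\substack{2\le i\le k\\ i\neq j}}\big(x-(n_i-1)\sqrt{2}d_i\big)\right),\] where $\chi(M,x)=\det(xI-M)$ and $S(\Gamma)$ is the Sombor matrix of $\Gamma$.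
   Context: All graphs are finite, simple and undirected. For a graph $\Gamma$ with vertices $u_1,\dots,u_m$, the Sombor matrix $S(\Gamma)$ is the $m\times m$ matrix whose $(i,j)$ entry is $\sqrt{\deg(u_i)^2+\deg(u_j)^2}$ if $u_i$ and $u_j$ are adjacent and $0$ otherwise. $K_r$ is the complete graph on $r$ vertices and $K_{1,k-1}$ is the star with center $u_1$ and leaves $u_2,\dots,u_k$. For a graph $H$ with vertices $u_1,\dots,u_k$ and pairwise disjoint graphs $\Gamma_1,\dots,\Gamma_k$, the generalized join $H[\Gamma_1,\dots,\Gamma_k]$ is obtained by replacing each $u_i$ by $\Gamma_i$ and joining every vertex of $\Gamma_i$ to every vertex of $\Gamma_j$ whenever $u_i$ is adjacent to $u_j$ in $H$. *)

theory Defs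
  imports Complex_Main "Jordan_Normal_Form.Char_Poly"
begin

text \<open>A finite simple graph on the vertex set {0..<m} is given by a (symmetric,
irreflexive) adjacency predicate E.\<close>

definition gdeg :: "nat \<Rightarrow> (nat \<Rightarrow> nat \<Rightarrow> bool) \<Rightarrow> nat \<Rightarrow> nat" where
  "gdeg m E u = card {v. v < m \<and> E u v}"

definition sombor_matrix :: "nat \<Rightarrow> (nat \<Rightarrow> nat \<Rightarrow> bool) \<Rightarrow> real mat" where
  "sombor_matrix m E = mat m m (\<lambda>(i, j). if E i j
      then sqrt (real (gdeg m E i) ^ 2 + real (gdeg m E j) ^ 2) else 0)"

definition chi :: "real mat \<Rightarrow> real \<Rightarrow> real" where
  "chi M x = poly (char_poly M) x"

definition complete_adj :: "nat \<Rightarrow> nat \<Rightarrow> bool" where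
  "complete_adj a b = (a \<noteq> b)"

definition star_adj :: "nat \<Rightarrow> nat \<Rightarrow> nat \<Rightarrow> bool" where
  "star_adj k i j = (i \<in> {1..k} \<and> j \<in> {1..k} \<and> i \<noteq> j \<and> (i = 1 \<or> j = 1))"

text \<open>Generalized join H[Gamma_1,...,Gamma_k]: block i (1 \<le> i \<le> k) consists of
the ns i consecutive vertices offset i, ..., offset i + ns i - 1.\<close>
definition block_offset :: "(nat \<Rightarrow> nat) \<Rightarrow> nat \<Rightarrow> nat" where
  "block_offset ns i = (\<Sum>l\<in>{1..<i}. ns l)"

definition block_of :: "(nat \<Rightarrow> nat) \<Rightarrow> nat \<Rightarrow> nat" where
  "block_of ns u = (LEAST i. u < block_offset ns (Suc i))"

definition local_idx :: "(nat \<Rightarrow> nat) \<Rightarrow> nat \<Rightarrow> nat" where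
  "local_idx ns u = u - block_offset ns (block_of ns u)"

definition gen_join :: "(nat \<Rightarrow> nat \<Rightarrow> bool) \<Rightarrow> (nat \<Rightarrow> nat) \<Rightarrow> (nat \<Rightarrow> nat \<Rightarrow> nat \<Rightarrow> bool)
    \<Rightarrow> nat \<Rightarrow> nat \<Rightarrow> bool" where
  "gen_join H ns G u v =
     (if block_of ns u = block_of ns v
      then G (block_of ns u) (local_idx ns u) (local_idx ns v)
      else H (block_of ns u) (block_of ns v))"

end

theory Submission
  imports Defs
begin

text \<open>All vertices of the clique replacing u_i have the same degree D_i, so x I - S(\<Gamma>) has the
block form \<alpha>(b u) \<delta>_uv - W(b u, b v), where b u is the block of u. Subtracting the row of one
vertex of a block from that of another and adding back the corresponding column splits off a
factor \<alpha>_i = x + \<surd>2 D_i and merges the two vertices. Repeating this n_i - 1 times in every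
block leaves the k \<times> k quotient matrix with diagonal x - (n_i - 1) \<surd>2 D_i and off-diagonal
entries -n_j W_ij. For the star this quotient is an arrowhead matrix, whose determinant is
obtained by expanding along the last row.\<close>

lemma det_mat_diag: "det (mat_diag n f) = (\<Prod>i<n. f i :: 'a :: comm_ring_1)"
proof -
  have "det (mat_diag n f) = prod_list (diag_mat (mat_diag n f))"
    by (rule det_upper_triangular[of _ n]) (auto simp: upper_triangular_def mat_diag_def)
  also have "\<dots> = (\<Prod>i<n. f i)"
    by (simp add: prod_list_diag_prod atLeast0LessThan mat_diag_def)
  finally show ?thesis .
qed

lemma det_single_entry_row:
  assumes A: "(A :: 'a :: comm_ring_1 mat) \<in> carrier_mat n n" and i: "i < n" and j: "j < n"
    and zero: "\<And>l. l < n \<Longrightarrow> l \<noteq> j \<Longrightarrow> A $$ (i, l) = 0"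
  shows "det A = A $$ (i, j) * cofactor A i j"
proof -
  have "det A = (\<Sum>l<n. A $$ (i, l) * cofactor A i l)"
    by (rule laplace_expansion_row[OF A i])
  also have "\<dots> = A $$ (i, j) * cofactor A i j"
    using j zero by (subst sum.remove[of _ j]) (auto intro!: sum.neutral)
  finally show ?thesis .
qed

lemma det_single_entry_col:
  assumes A: "(A :: 'a :: comm_ring_1 mat) \<in> carrier_mat n n" and i: "i < n" and j: "j < n"
    and zero: "\<And>l. l < n \<Longrightarrow> l \<noteq> i \<Longrightarrow> A $$ (l, j) = 0"
  shows "det A = A $$ (i, j) * cofactor A i j"
proof -
  have "det A = (\<Sum>l<n. A $$ (l, j) * cofactor A l j)"
    by (rule laplace_expansion_column[OF A j])
  also have "\<dots> = A $$ (i, j) * cofactor A i j"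
    using i zero by (subst sum.remove[of _ i]) (auto intro!: sum.neutral)
  finally show ?thesis .
qed

lemma cofactor_diag: "cofactor A i i = det (mat_delete A i i)"
  by (simp add: cofactor_def flip: mult_2)

lemma insert_index_image_lessThan: "q < Suc N \<Longrightarrow> insert_index q ` {..<N} = {..<Suc N} - {q}"
  using insert_index_image[of q N] by (simp add: atLeast0LessThan)

lemma sum_insert_index:
  assumes "q < Suc N"
  shows "(\<Sum>u<Suc N. f u) = f q + (\<Sum>v<N. f (insert_index q v))"
proof -
  have "(\<Sum>u<Suc N. f u) = f q + sum f ({..<Suc N} - {q})"
    using assms by (intro sum.remove) auto
  also have "{..<Suc N} - {q} = insert_index q ` {..<N}"
    using insert_index_image_lessThan[OF assms] by simp
  also have "sum f \<dots> = (\<Sum>v<N. f (insert_index q v))"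
    by (simp add: sum.reindex insert_index_inj_on)
  finally show ?thesis .
qed

lemma image_comp_insert_index:
  assumes "p < q" and q: "q < Suc N" and "b p = b q"
  shows "(b \<circ> insert_index q) ` {..<N} = b ` {..<Suc N}"
proof -
  have "(b \<circ> insert_index q) ` {..<N} = b ` ({..<Suc N} - {q})"
    unfolding image_comp[symmetric] insert_index_image_lessThan[OF q] ..
  moreover have "b q \<in> b ` ({..<Suc N} - {q})"
    using assms by (auto intro!: image_eqI[of _ _ p])
  ultimately show ?thesis using q by (auto simp: image_iff)
qed

lemma strict_mono_on_if_no_repeat:
  fixes b :: "nat \<Rightarrow> nat"
  assumes mono: "mono_on {..<N} b" and no_repeat: "\<And>p. Suc p < N \<Longrightarrow> b p \<noteq> b (Suc p)"
  shows "strict_mono_on {..<N} b"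
proof (rule strict_mono_onI)
  fix r s assume "r \<in> {..<N}" "s \<in> {..<N}" "r < s"
  then obtain t where t: "s = Suc t" "r \<le> t" "Suc t < N" by (cases s) auto
  then have "b r \<le> b t" "b t \<le> b s" using mono_onD[OF mono] by auto
  moreover have "b t \<noteq> b s" using no_repeat t by blast
  ultimately show "b r < b s" by simp
qed

lemma strict_mono_on_onto_lessThan:
  fixes b :: "nat \<Rightarrow> nat"
  assumes strict: "strict_mono_on {..<N} b" and onto: "b ` {..<N} = {..<K}"
  shows "K = N" and "u < N \<Longrightarrow> b u = u"
proof -
  have inj: "inj_on b {..<N}" using strict by (rule strict_mono_on_imp_inj_on)
  then show "K = N" using onto card_image by fastforce
  assume u: "u < N"
  have mono: "b v \<le> b v'" if "v \<le> v'" "v' < N" for v v'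
    using strict that by (cases "v = v'") (auto simp: strict_mono_on_def less_imp_le)
  have "card {..u} \<le> card {..b u}"
    using u mono by (intro card_inj_on_le[OF inj_on_subset[OF inj]]) auto
  moreover have "card {u..<N} \<le> card {b u..<N}"
    using u mono onto \<open>K = N\<close> by (intro card_inj_on_le[OF inj_on_subset[OF inj]]) auto
  ultimately show "b u = u" using u by simp
qed

text \<open>Vertex u lies in block b u. For a join of cliques, x I - S(\<Gamma>) has this form with w = 1;
other weights w arise once two vertices of a block have been merged.\<close>

definition block_pencil :: "nat \<Rightarrow> (nat \<Rightarrow> nat) \<Rightarrow> (nat \<Rightarrow> 'a) \<Rightarrow> (nat \<Rightarrow> 'a)
    \<Rightarrow> (nat \<Rightarrow> nat \<Rightarrow> 'a) \<Rightarrow> 'a :: comm_ring_1 mat" where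
  "block_pencil N b w \<alpha> W =
     mat N N (\<lambda>(u, v). (if u = v then \<alpha> (b u) else 0) - w v * W (b u) (b v))"

definition block_weight :: "nat \<Rightarrow> (nat \<Rightarrow> nat) \<Rightarrow> (nat \<Rightarrow> 'a) \<Rightarrow> nat \<Rightarrow> 'a :: comm_monoid_add" where
  "block_weight N b w j = (\<Sum>u<N. if b u = j then w u else 0)"

definition block_quotient :: "nat \<Rightarrow> nat \<Rightarrow> (nat \<Rightarrow> nat) \<Rightarrow> (nat \<Rightarrow> 'a) \<Rightarrow> (nat \<Rightarrow> 'a)
    \<Rightarrow> (nat \<Rightarrow> nat \<Rightarrow> 'a) \<Rightarrow> 'a :: comm_ring_1 mat" where
  "block_quotient K N b w \<alpha> W =
     mat K K (\<lambda>(i, j). (if i = j then \<alpha> i else 0) - W i j * block_weight N b w j)"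

definition merged_weight :: "nat \<Rightarrow> nat \<Rightarrow> (nat \<Rightarrow> 'a) \<Rightarrow> nat \<Rightarrow> 'a :: comm_monoid_add" where
  "merged_weight p q w v = w (insert_index q v) + (if v = p then w q else 0)"

lemma of_nat_card_block_eq_block_weight:
  "of_nat (card {u. u < N \<and> b u = i}) = block_weight N b (\<lambda>_. 1) i"
  by (simp add: block_weight_def sum.If_cases Collect_conj_eq lessThan_def)

text \<open>Subtract row p from row q, then add column q to column p: row q becomes \<alpha>(b q) times
the q-th unit vector, and deleting row and column q leaves the pencil in which q is merged
into p.\<close>

lemma det_block_pencil_merge:
  fixes W :: "nat \<Rightarrow> nat \<Rightarrow> 'a :: comm_ring_1"
  assumes pq: "p < q" and q: "q < Suc N" and same: "b p = b q"
  shows "det (block_pencil (Suc N) b w \<alpha> W) = \<alpha> (b q) *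
    det (block_pencil N (b \<circ> insert_index q) (merged_weight p q w) \<alpha> W)"
proof -
  define G where "G = block_pencil (Suc N) b w \<alpha> W"
  define A where "A = addcol 1 p q (addrow (-1) q p G)"
  have G: "G \<in> carrier_mat (Suc N) (Suc N)" by (simp add: G_def block_pencil_def)
  have A: "A \<in> carrier_mat (Suc N) (Suc N)" using G by (auto simp: A_def)
  have "det G = det A"
    using pq q G det_addrow[of p "Suc N" q G "-1"] by (simp add: A_def)
  have A_entry: "A $$ (r, c) = (if r = q then (if c = q then \<alpha> (b q) else 0) else
       (if r = c then \<alpha> (b r) else 0) - (w c + (if c = p then w q else 0)) * W (b r) (b c))"
    if "r < Suc N" "c < Suc N" for r c
    using that pq q same G
    by (cases "c = p") (simp_all add: A_def G_def block_pencil_def algebra_simps)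
  have "det A = \<alpha> (b q) * det (mat_delete A q q)"
    using det_single_entry_row[OF A q q] by (simp add: A_entry q cofactor_diag)
  moreover have "mat_delete A q q = block_pencil N (b \<circ> insert_index q) (merged_weight p q w) \<alpha> W"
    using A pq by (intro eq_matI)
      (auto simp: block_pencil_def mat_delete_def A_entry insert_index_def merged_weight_def)
  ultimately show ?thesis using \<open>det G = det A\<close> by (simp add: G_def)
qed

lemma block_quotient_merge:
  assumes pq: "p < q" and q: "q < Suc N" and same: "b p = b q"
  shows "block_quotient K N (b \<circ> insert_index q) (merged_weight p q w) \<alpha> W =
    block_quotient K (Suc N) b w \<alpha> W"
proof -
  have "block_weight N (b \<circ> insert_index q) (merged_weight p q w) j = block_weight (Suc N) b w j"
    for j
  proof -
    have "block_weight N (b \<circ> insert_index q) (merged_weight p q w) j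
        = (\<Sum>v<N. (if b (insert_index q v) = j then w (insert_index q v) else 0)
            + (if v = p then (if b q = j then w q else 0) else 0))"
      unfolding block_weight_def merged_weight_def using pq same by (intro sum.cong) auto
    also have "\<dots> = (\<Sum>v<N. if b (insert_index q v) = j then w (insert_index q v) else 0)
        + (if b q = j then w q else 0)"
      using pq q by (simp add: sum.distrib)
    also have "\<dots> = block_weight (Suc N) b w j"
      using sum_insert_index[OF q, of "\<lambda>u. if b u = j then w u else 0"]
      by (simp add: block_weight_def add.commute)
    finally show ?thesis .
  qed
  then show ?thesis by (simp add: block_quotient_def)
qed

lemma prod_power_card_block_merge:
  fixes b :: "nat \<Rightarrow> nat" and \<alpha> :: "nat \<Rightarrow> 'a :: comm_monoid_mult"
  assumes "p < q" and q: "q < Suc N" and "b p = b q" and "b q < K"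
  shows "(\<Prod>i<K. \<alpha> i ^ (card {u. u < Suc N \<and> b u = i} - 1)) =
    \<alpha> (b q) * (\<Prod>i<K. \<alpha> i ^ (card {v. v < N \<and> (b \<circ> insert_index q) v = i} - 1))"
proof -
  have card: "card {u. u < Suc N \<and> b u = i} =
      card {v. v < N \<and> b (insert_index q v) = i} + (if b q = i then 1 else 0)" for i
    unfolding of_nat_card_block_eq_block_weight[where 'a = nat, simplified] block_weight_def
    by (subst sum_insert_index[OF q]) simp
  have "p \<in> {v. v < N \<and> b (insert_index q v) = b q}" using assms by simp
  then have "card {v. v < N \<and> b (insert_index q v) = b q} \<noteq> 0" by (auto simp: card_eq_0_iff)
  then obtain m where "card {v. v < N \<and> b (insert_index q v) = b q} = Suc m"
    using not0_implies_Suc by blast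
  then have exponent: "card {u. u < Suc N \<and> b u = i} - 1 =
      (card {v. v < N \<and> b (insert_index q v) = i} - 1) + (if b q = i then 1 else 0)" for i
    by (cases "b q = i") (auto simp: card)
  have "(\<Prod>i<K. \<alpha> i ^ (if b q = i then 1 else 0)) = \<alpha> (b q)"
    using assms(4) by (simp add: if_distrib[of "power _"] cong: if_cong)
  then show ?thesis
    unfolding exponent power_add prod.distrib by (simp add: mult.commute)
qed

lemma det_block_pencil_strict:
  fixes W :: "nat \<Rightarrow> nat \<Rightarrow> 'a :: comm_ring_1"
  assumes "strict_mono_on {..<N} b" and "b ` {..<N} = {..<K}"
  shows "det (block_pencil N b w \<alpha> W) =
    (\<Prod>i<K. \<alpha> i ^ (card {u. u < N \<and> b u = i} - 1)) * det (block_quotient K N b w \<alpha> W)"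
proof -
  have K: "K = N" and b: "\<And>u. u < N \<Longrightarrow> b u = u"
    using strict_mono_on_onto_lessThan[OF assms] by auto
  have single: "{u. u < N \<and> b u = i} = {i}" if "i < N" for i
    using b that by auto
  have "block_weight N b w j = w j" if "j < N" for j
    using b that by (simp add: block_weight_def cong: if_cong)
  then have "block_pencil N b w \<alpha> W = block_quotient K N b w \<alpha> W"
    by (intro eq_matI) (auto simp: block_pencil_def block_quotient_def K b)
  then show ?thesis by (simp add: K single)
qed

lemma det_block_pencil:
  fixes W :: "nat \<Rightarrow> nat \<Rightarrow> 'a :: comm_ring_1"
  assumes "mono_on {..<N} b" and "b ` {..<N} = {..<K}"
  shows "det (block_pencil N b w \<alpha> W) =
    (\<Prod>i<K. \<alpha> i ^ (card {u. u < N \<and> b u = i} - 1)) * det (block_quotient K N b w \<alpha> W)"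
  using assms
proof (induction N arbitrary: b w)
  case 0
  then have "K = 0" by auto
  then show ?case by (simp add: block_pencil_def block_quotient_def)
next
  case (Suc N)
  show ?case
  proof (cases "\<exists>p. Suc p < Suc N \<and> b p = b (Suc p)")
    case False
    then have "strict_mono_on {..<Suc N} b"
      using Suc.prems(1) by (blast intro: strict_mono_on_if_no_repeat)
    then show ?thesis using Suc.prems(2) by (rule det_block_pencil_strict)
  next
    case True
    then obtain p where "Suc p < Suc N" and "b p = b (Suc p)" by blast
    then obtain q where pq: "p < q" and q: "q < Suc N" and bq: "b p = b q" by blast
    have "mono_on {..<N} (b \<circ> insert_index q)"
      using Suc.prems(1) by (auto simp: mono_on_def insert_index_def)
    moreover have "(b \<circ> insert_index q) ` {..<N} = {..<K}"
      using image_comp_insert_index[OF pq q bq] Suc.prems(2) by simp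
    ultimately have IH: "det (block_pencil N (b \<circ> insert_index q) (merged_weight p q w) \<alpha> W) =
        (\<Prod>i<K. \<alpha> i ^ (card {v. v < N \<and> (b \<circ> insert_index q) v = i} - 1)) *
        det (block_quotient K N (b \<circ> insert_index q) (merged_weight p q w) \<alpha> W)"
      by (rule Suc.IH)
    have "b q < K" using Suc.prems(2) q by auto
    show ?thesis
      unfolding det_block_pencil_merge[OF pq q bq] IH block_quotient_merge[OF pq q bq]
        prod_power_card_block_merge[OF pq q bq \<open>b q < K\<close>]
      by (simp only: mult.assoc)
  qed
qed

definition arrowhead_mat :: "nat \<Rightarrow> (nat \<Rightarrow> 'a) \<Rightarrow> (nat \<Rightarrow> 'a) \<Rightarrow> (nat \<Rightarrow> 'a) \<Rightarrow> 'a :: zero mat" where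
  "arrowhead_mat K \<beta> r c = mat K K (\<lambda>(i, j).
     if i = j then \<beta> i else if i = 0 then r j else if j = 0 then c i else 0)"

lemma cofactor_arrowhead_corner:
  fixes \<beta> :: "nat \<Rightarrow> 'a :: comm_ring_1"
  assumes "K \<noteq> 0"
  shows "cofactor (arrowhead_mat (Suc K) \<beta> r c) K 0 = - r K * (\<Prod>i\<in>{1..<K}. \<beta> i)"
proof -
  define B where "B = mat_delete (arrowhead_mat (Suc K) \<beta> r c) K 0"
  have B: "B \<in> carrier_mat K K" by (simp add: B_def arrowhead_mat_def mat_delete_def)
  have B_entry: "B $$ (i, j) = (if Suc j = i then \<beta> i else if i = 0 then r (Suc j) else 0)"
    if "i < K" "j < K" for i j
    using that by (simp add: B_def arrowhead_mat_def mat_delete_def)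
  have "mat_delete B 0 (K - 1) = mat_diag (K - 1) (\<lambda>i. \<beta> (Suc i))"
    using B by (intro eq_matI) (auto simp: mat_delete_def mat_diag_def B_entry)
  moreover have "det B = B $$ (0, K - 1) * cofactor B 0 (K - 1)"
    using assms by (intro det_single_entry_col[OF B]) (auto simp: B_entry)
  ultimately have det_B: "det B = r K * ((-1) ^ (K - 1) * (\<Prod>i<K - 1. \<beta> (Suc i)))"
    using assms by (simp add: B_entry cofactor_def det_mat_diag)
  have shift: "(\<Prod>i<K - 1. \<beta> (Suc i)) = (\<Prod>i\<in>{1..<K}. \<beta> i)"
    using assms prod.shift_bounds_Suc_ivl[of \<beta> 0 "K - 1"] by (simp add: atLeast0LessThan)
  have sign: "(-1 :: 'a) ^ K * (-1) ^ (K - 1) = -1"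
  proof -
    obtain m where "K = Suc m" using assms not0_implies_Suc by blast
    then show ?thesis by (simp flip: power_add mult_2)
  qed
  have "cofactor (arrowhead_mat (Suc K) \<beta> r c) K 0 = (-1) ^ K * det B"
    by (simp add: cofactor_def B_def)
  also have "\<dots> = r K * (\<Prod>i\<in>{1..<K}. \<beta> i) * ((-1) ^ K * (-1) ^ (K - 1))"
    unfolding det_B shift by (simp only: ac_simps)
  finally show ?thesis unfolding sign by simp
qed

lemma sum_mult_prod_remove_Suc:
  fixes \<beta> :: "nat \<Rightarrow> 'a :: comm_ring_1"
  assumes "K \<noteq> 0"
  shows "(\<Sum>j\<in>{1..<Suc K}. g j * (\<Prod>i\<in>{1..<Suc K} - {j}. \<beta> i)) =
    g K * (\<Prod>i\<in>{1..<K}. \<beta> i) + \<beta> K * (\<Sum>j\<in>{1..<K}. g j * (\<Prod>i\<in>{1..<K} - {j}. \<beta> i))"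
proof -
  have "{1..<Suc K} - {j} = insert K ({1..<K} - {j})" if "j \<in> {1..<K}" for j
    using that by auto
  then have "(\<Sum>j\<in>{1..<K}. g j * (\<Prod>i\<in>{1..<Suc K} - {j}. \<beta> i)) =
      \<beta> K * (\<Sum>j\<in>{1..<K}. g j * (\<Prod>i\<in>{1..<K} - {j}. \<beta> i))"
    unfolding sum_distrib_left by (intro sum.cong) simp_all
  moreover have "{1..<Suc K} - {K} = {1..<K}" by auto
  ultimately show ?thesis
    using assms by (simp add: sum.atLeastLessThan_Suc)
qed

lemma det_arrowhead_mat:
  fixes \<beta> :: "nat \<Rightarrow> 'a :: comm_ring_1"
  shows "det (arrowhead_mat K \<beta> r c) =
    (\<Prod>i<K. \<beta> i) - (\<Sum>j\<in>{1..<K}. r j * c j * (\<Prod>i\<in>{1..<K} - {j}. \<beta> i))"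
proof (induction K)
  case 0
  then show ?case by (simp add: arrowhead_mat_def)
next
  case (Suc K)
  show ?case
  proof (cases "K = 0")
    case True
    then show ?thesis by (subst det_single) (auto simp: arrowhead_mat_def)
  next
    case False
    define A where "A = arrowhead_mat (Suc K) \<beta> r c"
    have A: "A \<in> carrier_mat (Suc K) (Suc K)" by (simp add: A_def arrowhead_mat_def)
    have "det A = (\<Sum>l<Suc K. A $$ (K, l) * cofactor A K l)"
      by (rule laplace_expansion_row[OF A]) simp
    also have "\<dots> = (\<Sum>l<Suc K. (if l = K then \<beta> K * cofactor A K K else 0)
        + (if l = 0 then c K * cofactor A K 0 else 0))"
      using False by (intro sum.cong) (auto simp: A_def arrowhead_mat_def)
    also have "\<dots> = \<beta> K * det (arrowhead_mat K \<beta> r c) - r K * c K * (\<Prod>i\<in>{1..<K}. \<beta> i)"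
    proof -
      have "mat_delete A K K = arrowhead_mat K \<beta> r c"
        by (intro eq_matI) (auto simp: A_def arrowhead_mat_def mat_delete_def)
      then show ?thesis
        using False cofactor_arrowhead_corner[OF False, of \<beta> r c]
        by (simp add: sum.distrib cofactor_diag A_def)
    qed
    also have "\<dots> = (\<Prod>i<Suc K. \<beta> i)
        - (\<Sum>j\<in>{1..<Suc K}. r j * c j * (\<Prod>i\<in>{1..<Suc K} - {j}. \<beta> i))"
      using sum_mult_prod_remove_Suc[OF False, of "\<lambda>j. r j * c j" \<beta>]
      by (simp add: Suc.IH algebra_simps)
    finally show ?thesis by (simp add: A_def)
  qed
qed

definition block :: "(nat \<Rightarrow> nat) \<Rightarrow> nat \<Rightarrow> nat set" where
  "block ns i = {block_offset ns i..<block_offset ns (Suc i)}"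

lemma block_offset_Suc: "1 \<le> i \<Longrightarrow> block_offset ns (Suc i) = block_offset ns i + ns i"
  by (simp add: block_offset_def atLeastLessThanSuc)

lemma block_offset_mono: "i \<le> j \<Longrightarrow> block_offset ns i \<le> block_offset ns j"
  unfolding block_offset_def by (rule sum_mono2) auto

lemma block_offset_Suc_eq_sum: "block_offset ns (Suc k) = (\<Sum>i=1..k. ns i)"
  by (simp add: block_offset_def atLeastLessThanSuc_atLeastAtMost)

lemma finite_block [simp]: "finite (block ns i)"
  by (simp add: block_def)

lemma card_block: "1 \<le> i \<Longrightarrow> card (block ns i) = ns i"
  by (simp add: block_def block_offset_Suc)

lemma block_subset: "i \<le> k \<Longrightarrow> block ns i \<subseteq> {..<block_offset ns (Suc k)}"
  using block_offset_mono[of "Suc i" "Suc k" ns] by (auto simp: block_def)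

lemma block_of_eqI:
  assumes "u \<in> block ns i"
  shows "block_of ns u = i"
  unfolding block_of_def
proof (rule Least_equality)
  show "u < block_offset ns (Suc i)" using assms by (simp add: block_def)
  show "i \<le> j" if "u < block_offset ns (Suc j)" for j
    using that assms block_offset_mono[of "Suc j" i ns] by (cases "i \<le> j") (auto simp: block_def)
qed

lemma block_unique: "u \<in> block ns i \<Longrightarrow> u \<in> block ns j \<Longrightarrow> i = j"
  using block_of_eqI by metis

lemma block_of_bounds:
  assumes "u < block_offset ns (Suc k)"
  shows "1 \<le> block_of ns u" and "block_of ns u \<le> k" and "u \<in> block ns (block_of ns u)"
proof -
  define P where "P = (\<lambda>j. u < block_offset ns (Suc j))"
  have block_of: "block_of ns u = Least P" by (simp add: block_of_def P_def)
  have "P (Least P)" and "Least P \<le> k"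
    using assms LeastI[of P k] Least_le[of P k] by (auto simp: P_def)
  moreover have "\<not> P 0" by (simp add: P_def block_offset_def)
  then have "Least P \<noteq> 0" using \<open>P (Least P)\<close> by metis
  then have "\<not> P (Least P - 1)" using not_less_Least[of "Least P - 1" P] by simp
  ultimately show "1 \<le> block_of ns u" and "block_of ns u \<le> k" and "u \<in> block ns (block_of ns u)"
    using \<open>Least P \<noteq> 0\<close> by (auto simp: block_of block_def P_def)
qed

lemma block_of_eq_iff:
  "u < block_offset ns (Suc k) \<Longrightarrow> block_of ns u = i \<longleftrightarrow> u \<in> block ns i"
  using block_of_bounds(3) block_of_eqI by blast

lemma mono_on_block_of: "mono_on {..<block_offset ns (Suc k)} (block_of ns)"
proof (rule mono_onI)
  fix u v assume uv: "u \<in> {..<block_offset ns (Suc k)}" "v \<in> {..<block_offset ns (Suc k)}" "u \<le> v"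
  show "block_of ns u \<le> block_of ns v"
  proof (rule ccontr)
    assume "\<not> block_of ns u \<le> block_of ns v"
    then have "block_offset ns (Suc (block_of ns v)) \<le> block_offset ns (block_of ns u)"
      by (intro block_offset_mono) simp
    then show False
      using block_of_bounds(3)[of u ns k] block_of_bounds(3)[of v ns k] uv by (auto simp: block_def)
  qed
qed

lemma block_of_image:
  assumes "\<And>i. 1 \<le> i \<Longrightarrow> i \<le> k \<Longrightarrow> 1 \<le> ns i"
  shows "block_of ns ` {..<block_offset ns (Suc k)} = {1..k}"
proof
  show "block_of ns ` {..<block_offset ns (Suc k)} \<subseteq> {1..k}"
    using block_of_bounds by fastforce
  show "{1..k} \<subseteq> block_of ns ` {..<block_offset ns (Suc k)}"
  proof
    fix i assume i: "i \<in> {1..k}"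
    then have "block_offset ns i \<in> block ns i"
      using assms[of i] by (simp add: block_def block_offset_Suc)
    then have "block_of ns (block_offset ns i) = i" by (rule block_of_eqI)
    then show "i \<in> block_of ns ` {..<block_offset ns (Suc k)}"
      using i \<open>block_offset ns i \<in> block ns i\<close> block_subset[of i k ns] by force
  qed
qed

lemma block_of_pred_fiber:
  assumes "i < k"
  shows "{u. u < block_offset ns (Suc k) \<and> block_of ns u - 1 = i} = block ns (Suc i)"
proof (rule Set.set_eqI)
  fix u
  show "u \<in> {u. u < block_offset ns (Suc k) \<and> block_of ns u - 1 = i} \<longleftrightarrow> u \<in> block ns (Suc i)"
  proof (cases "u < block_offset ns (Suc k)")
    case True
    then show ?thesis
      using block_of_bounds(1)[OF True] block_of_eq_iff[OF True, of "Suc i"] by auto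
  next
    case False
    then show ?thesis using assms block_subset[of "Suc i" k ns] by auto
  qed
qed

lemma gen_join_cliques_iff:
  assumes u: "u < block_offset ns (Suc k)" and v: "v < block_offset ns (Suc k)"
  shows "gen_join H ns (\<lambda>_. complete_adj) u v \<longleftrightarrow>
    u \<noteq> v \<and> (block_of ns u = block_of ns v \<or> H (block_of ns u) (block_of ns v))"
proof (cases "block_of ns u = block_of ns v")
  case True
  moreover have "block_offset ns (block_of ns v) \<le> u" "block_offset ns (block_of ns v) \<le> v"
    using block_of_bounds(3)[OF u] block_of_bounds(3)[OF v] True by (auto simp: block_def)
  ultimately show ?thesis by (auto simp: gen_join_def local_idx_def complete_adj_def)
next
  case False
  then show ?thesis by (auto simp: gen_join_def)
qed

definition join_degree :: "(nat \<Rightarrow> nat \<Rightarrow> bool) \<Rightarrow> nat \<Rightarrow> (nat \<Rightarrow> nat) \<Rightarrow> nat \<Rightarrow> nat" where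
  "join_degree H k ns i = ns i - 1 + (\<Sum>j | j \<in> {1..k} \<and> j \<noteq> i \<and> H i j. ns j)"

lemma gdeg_gen_join_cliques:
  assumes u: "u < block_offset ns (Suc k)"
  shows "gdeg (block_offset ns (Suc k)) (gen_join H ns (\<lambda>_. complete_adj)) u =
    join_degree H k ns (block_of ns u)"
proof -
  define i where "i = block_of ns u"
  define J where "J = {j. j \<in> {1..k} \<and> j \<noteq> i \<and> H i j}"
  have i: "1 \<le> i" "i \<le> k" "u \<in> block ns i" using block_of_bounds[OF u] by (auto simp: i_def)
  have "{v. v < block_offset ns (Suc k) \<and> gen_join H ns (\<lambda>_. complete_adj) u v} =
      (block ns i - {u}) \<union> (\<Union>j\<in>J. block ns j)"
  proof (rule Set.set_eqI, rule iffI)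
    fix v assume "v \<in> {v. v < block_offset ns (Suc k) \<and> gen_join H ns (\<lambda>_. complete_adj) u v}"
    then show "v \<in> (block ns i - {u}) \<union> (\<Union>j\<in>J. block ns j)"
      using block_of_bounds[of v ns k]
      by (auto simp: gen_join_cliques_iff[OF u] i_def[symmetric] J_def block_of_eq_iff)
  next
    fix v assume v: "v \<in> (block ns i - {u}) \<union> (\<Union>j\<in>J. block ns j)"
    then have "v < block_offset ns (Suc k)"
      using i block_subset[of _ k ns] by (auto simp: J_def)
    then show "v \<in> {v. v < block_offset ns (Suc k) \<and> gen_join H ns (\<lambda>_. complete_adj) u v}"
      using v i(3) by (auto simp: gen_join_cliques_iff[OF u] i_def[symmetric] J_def block_of_eqI
        dest: block_unique)
  qed
  moreover have "card ((block ns i - {u}) \<union> (\<Union>j\<in>J. block ns j)) = ns i - 1 + (\<Sum>j\<in>J. ns j)"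
  proof -
    have "card (\<Union>j\<in>J. block ns j) = (\<Sum>j\<in>J. ns j)"
      by (subst card_UN_disjoint) (auto simp: J_def card_block dest: block_unique)
    moreover have "(block ns i - {u}) \<inter> (\<Union>j\<in>J. block ns j) = {}"
      by (auto simp: J_def dest: block_unique)
    ultimately show ?thesis
      using i by (simp add: card_Un_disjoint card_block J_def)
  qed
  ultimately show ?thesis by (simp add: gdeg_def join_degree_def J_def i_def)
qed

lemma chi_eq_det: "M \<in> carrier_mat n n \<Longrightarrow>
  chi M x = det (mat n n (\<lambda>(u, v). (if u = v then x else 0) - M $$ (u, v)))"
  unfolding chi_def char_poly_matrix[of M n]
  by (auto intro!: arg_cong[of _ _ det] simp: char_matrix_def)

text \<open>Index i of the quotient matrix stands for block i + 1 of the join.\<close>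

definition clique_join_weight :: "(nat \<Rightarrow> nat \<Rightarrow> bool) \<Rightarrow> nat \<Rightarrow> (nat \<Rightarrow> nat) \<Rightarrow> nat \<Rightarrow> nat \<Rightarrow> real" where
  "clique_join_weight H k ns i j =
     (if i = j \<or> H (Suc i) (Suc j)
      then sqrt (real (join_degree H k ns (Suc i)) ^ 2 + real (join_degree H k ns (Suc j)) ^ 2)
      else 0)"

definition clique_join_quotient :: "(nat \<Rightarrow> nat \<Rightarrow> bool) \<Rightarrow> nat \<Rightarrow> (nat \<Rightarrow> nat) \<Rightarrow> real \<Rightarrow> real mat" where
  "clique_join_quotient H k ns x = mat k k (\<lambda>(i, j).
     if i = j then x - (real (ns (Suc i)) - 1) * sqrt 2 * real (join_degree H k ns (Suc i))
     else - real (ns (Suc j)) * clique_join_weight H k ns i j)"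

lemma clique_join_weight_diag:
  "clique_join_weight H k ns i i = sqrt 2 * real (join_degree H k ns (Suc i))"
  by (simp add: clique_join_weight_def real_sqrt_mult flip: mult_2)

lemma chi_sombor_gen_join_cliques_eq_det_block_pencil:
  fixes H :: "nat \<Rightarrow> nat \<Rightarrow> bool" and k :: nat and ns :: "nat \<Rightarrow> nat"
  defines "W \<equiv> clique_join_weight H k ns"
  shows "chi (sombor_matrix (block_offset ns (Suc k)) (gen_join H ns (\<lambda>_. complete_adj))) x =
    det (block_pencil (block_offset ns (Suc k)) (\<lambda>u. block_of ns u - 1) (\<lambda>_. 1) (\<lambda>i. x + W i i) W)"
proof -
  have "sombor_matrix (block_offset ns (Suc k)) (gen_join H ns (\<lambda>_. complete_adj)) $$ (u, v) =
      (if u = v then 0 else W (block_of ns u - 1) (block_of ns v - 1))"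
    if "u < block_offset ns (Suc k)" "v < block_offset ns (Suc k)" for u v
    using that block_of_bounds(1)[OF that(1)] block_of_bounds(1)[OF that(2)]
    by (auto simp: sombor_matrix_def gen_join_cliques_iff gdeg_gen_join_cliques W_def
        clique_join_weight_def)
  then show ?thesis
    by (subst chi_eq_det[of _ "block_offset ns (Suc k)"])
      (auto simp: sombor_matrix_def block_pencil_def intro!: arg_cong[of _ _ det])
qed

lemma block_quotient_gen_join_cliques:
  fixes H :: "nat \<Rightarrow> nat \<Rightarrow> bool" and k :: nat and ns :: "nat \<Rightarrow> nat"
  defines "W \<equiv> clique_join_weight H k ns"
  shows "block_quotient k (block_offset ns (Suc k)) (\<lambda>u. block_of ns u - 1) (\<lambda>_. 1)
      (\<lambda>i. x + W i i) W = clique_join_quotient H k ns x"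
proof -
  have "block_weight (block_offset ns (Suc k)) (\<lambda>u. block_of ns u - 1) (\<lambda>_. 1) j =
      real (ns (Suc j))" if "j < k" for j
    using of_nat_card_block_eq_block_weight[where 'a = real, of "block_offset ns (Suc k)"
        "\<lambda>u. block_of ns u - 1" j]
      block_of_pred_fiber[OF that]
    by (simp add: card_block)
  then show ?thesis
    by (intro eq_matI) (auto simp: block_quotient_def clique_join_quotient_def W_def
        clique_join_weight_diag algebra_simps)
qed

theorem chi_sombor_gen_join_cliques:
  assumes "\<And>i. 1 \<le> i \<Longrightarrow> i \<le> k \<Longrightarrow> 1 \<le> ns i"
  shows "chi (sombor_matrix (block_offset ns (Suc k)) (gen_join H ns (\<lambda>_. complete_adj))) x =
    (\<Prod>i=1..k. (x + sqrt 2 * real (join_degree H k ns i)) ^ (ns i - 1)) *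
    det (clique_join_quotient H k ns x)"
proof -
  define b where "b = (\<lambda>u. block_of ns u - 1)"
  define W where "W = clique_join_weight H k ns"
  have "mono_on {..<block_offset ns (Suc k)} b"
    using mono_on_block_of[of ns k] by (auto simp: mono_on_def b_def diff_le_mono)
  moreover have "b ` {..<block_offset ns (Suc k)} = {..<k}"
  proof -
    have "b ` {..<block_offset ns (Suc k)} =
        (\<lambda>i. i - 1) ` block_of ns ` {..<block_offset ns (Suc k)}"
      by (simp add: b_def image_image)
    also have "\<dots> = (\<lambda>i. i - 1) ` Suc ` {..<k}"
      using block_of_image[OF assms] by (simp add: image_Suc_lessThan)
    finally show ?thesis by (simp add: image_image)
  qed
  ultimately have "det (block_pencil (block_offset ns (Suc k)) b (\<lambda>_. 1) (\<lambda>i. x + W i i) W) =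
      (\<Prod>i<k. (x + W i i) ^ (card {u. u < block_offset ns (Suc k) \<and> b u = i} - 1)) *
      det (block_quotient k (block_offset ns (Suc k)) b (\<lambda>_. 1) (\<lambda>i. x + W i i) W)"
    by (rule det_block_pencil)
  also have "block_quotient k (block_offset ns (Suc k)) b (\<lambda>_. 1) (\<lambda>i. x + W i i) W =
      clique_join_quotient H k ns x"
    unfolding b_def W_def by (rule block_quotient_gen_join_cliques)
  also have "(\<Prod>i<k. (x + W i i) ^ (card {u. u < block_offset ns (Suc k) \<and> b u = i} - 1)) =
      (\<Prod>i<k. (x + sqrt 2 * real (join_degree H k ns (Suc i))) ^ (ns (Suc i) - 1))"
    by (intro prod.cong) (simp_all add: b_def W_def block_of_pred_fiber[simplified] card_block
        clique_join_weight_diag)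
  also have "\<dots> = (\<Prod>i=1..k. (x + sqrt 2 * real (join_degree H k ns i)) ^ (ns i - 1))"
    by (simp add: prod.atLeast1_atMost_eq)
  finally show ?thesis
    unfolding chi_sombor_gen_join_cliques_eq_det_block_pencil b_def W_def .
qed

lemma join_degree_star_center:
  assumes "1 \<le> k" and "1 \<le> ns 1"
  shows "join_degree (star_adj k) k ns 1 = (\<Sum>i=1..k. ns i) - 1"
proof -
  have "{j. j \<in> {1..k} \<and> j \<noteq> 1 \<and> star_adj k 1 j} = {Suc 1..k}"
    by (auto simp: star_adj_def)
  moreover have "(\<Sum>i=1..k. ns i) = ns 1 + (\<Sum>i=Suc 1..k. ns i)"
    using assms(1) by (simp add: sum.atLeast_Suc_atMost)
  ultimately show ?thesis using assms(2) by (simp add: join_degree_def)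
qed

lemma join_degree_star_leaf:
  assumes "2 \<le> i" and "i \<le> k" and "1 \<le> ns i"
  shows "join_degree (star_adj k) k ns i = ns 1 + ns i - 1"
proof -
  have "{j. j \<in> {1..k} \<and> j \<noteq> i \<and> star_adj k i j} = {1}"
    using assms by (auto simp: star_adj_def)
  then show ?thesis using assms(3) by (simp add: join_degree_def)
qed

lemma clique_join_quotient_star:
  "clique_join_quotient (star_adj k) k ns x = arrowhead_mat k
    (\<lambda>i. x - (real (ns (Suc i)) - 1) * sqrt 2 * real (join_degree (star_adj k) k ns (Suc i)))
    (\<lambda>j. - real (ns (Suc j)) * clique_join_weight (star_adj k) k ns 0 j)
    (\<lambda>i. - real (ns 1) * clique_join_weight (star_adj k) k ns i 0)"
  by (intro eq_matI)
    (auto simp: clique_join_quotient_def arrowhead_mat_def clique_join_weight_def star_adj_def)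

lemma det_clique_join_quotient_star:
  fixes k :: nat and ns :: "nat \<Rightarrow> nat" and x :: real
  defines "D \<equiv> \<lambda>i. real (join_degree (star_adj k) k ns i)"
  defines "f \<equiv> \<lambda>i. x - (real (ns i) - 1) * sqrt 2 * D i"
  shows "det (clique_join_quotient (star_adj k) k ns x) =
    (\<Prod>i=1..k. f i) - (\<Sum>j=2..k. real (ns 1) * real (ns j) * (D 1 ^ 2 + D j ^ 2) *
      (\<Prod>i\<in>{2..k} - {j}. f i))"
proof -
  define r where "r j = - real (ns (Suc j)) * clique_join_weight (star_adj k) k ns 0 j" for j
  define c where "c i = - real (ns 1) * clique_join_weight (star_adj k) k ns i 0" for i
  have rc: "r j * c j = real (ns 1) * real (ns (Suc j)) * (D 1 ^ 2 + D (Suc j) ^ 2)"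
    if "j \<in> {1..<k}" for j
  proof -
    have "clique_join_weight (star_adj k) k ns 0 j * clique_join_weight (star_adj k) k ns j 0
        = D 1 ^ 2 + D (Suc j) ^ 2"
      using that by (simp add: clique_join_weight_def star_adj_def D_def add.commute
          flip: power2_eq_square)
    then show ?thesis by (simp add: r_def c_def algebra_simps)
  qed
  have "det (clique_join_quotient (star_adj k) k ns x) = (\<Prod>i<k. f (Suc i)) -
      (\<Sum>j\<in>{1..<k}. r j * c j * (\<Prod>i\<in>{1..<k} - {j}. f (Suc i)))"
    unfolding clique_join_quotient_star det_arrowhead_mat
    by (simp add: f_def D_def r_def c_def)
  also have "\<dots> = (\<Prod>i<k. f (Suc i)) -
      (\<Sum>j\<in>{1..<k}. real (ns 1) * real (ns (Suc j)) * (D 1 ^ 2 + D (Suc j) ^ 2) *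
        (\<Prod>i\<in>{1..<k} - {j}. f (Suc i)))"
    using rc by (intro arg_cong[where f = "\<lambda>s. _ - s"] sum.cong) simp_all
  also have "(\<Sum>j\<in>{1..<k}. real (ns 1) * real (ns (Suc j)) * (D 1 ^ 2 + D (Suc j) ^ 2) *
        (\<Prod>i\<in>{1..<k} - {j}. f (Suc i))) =
      (\<Sum>j=2..k. real (ns 1) * real (ns j) * (D 1 ^ 2 + D j ^ 2) * (\<Prod>i\<in>{2..k} - {j}. f i))"
  proof -
    have "(\<Prod>i\<in>{2..k} - {Suc j}. f i) = (\<Prod>i\<in>{1..<k} - {j}. f (Suc i))" for j
      by (rule prod.reindex_cong[of Suc])
        (simp_all add: image_set_diff atLeastLessThanSuc_atLeastAtMost numeral_2_eq_2)
    then show ?thesis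
      by (intro sym[OF sum.reindex_cong[of Suc]])
        (simp_all add: atLeastLessThanSuc_atLeastAtMost numeral_2_eq_2)
  qed
  finally show ?thesis by (simp add: prod.atLeast1_atMost_eq)
qed

theorem corollary3p5:
  fixes k :: nat and ns :: "nat \<Rightarrow> nat" and x :: real
  assumes "k \<ge> 2"
    and "\<forall>i\<in>{1..k}. ns i \<ge> 1"
  defines "n \<equiv> (\<Sum>i=1..k. ns i)"
  defines "d \<equiv> (\<lambda>i. if i = 1 then real n - 1 else real (ns 1) + real (ns i) - 1)"
  defines "E \<equiv> gen_join (star_adj k) ns (\<lambda>_. complete_adj)"
  shows "chi (sombor_matrix n E) x =
    (\<Prod>i=1..k. (x + sqrt 2 * d i) ^ (ns i - 1)) *
    ((\<Prod>i=1..k. (x - (real (ns i) - 1) * sqrt 2 * d i))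
     - (\<Sum>j=2..k. real (ns 1) * real (ns j) * ((d 1)^2 + (d j)^2) *
          (\<Prod>i\<in>{2..k} - {j}. (x - (real (ns i) - 1) * sqrt 2 * d i))))"
proof -
  have ns: "1 \<le> ns i" if "1 \<le> i" "i \<le> k" for i
    using assms(2) that by auto
  have "ns 1 \<le> n"
    unfolding n_def using assms(1) by (intro member_le_sum) auto
  then have center: "real (join_degree (star_adj k) k ns 1) = d 1"
    using join_degree_star_center[of k ns] assms(1) ns[of 1] by (simp add: d_def n_def of_nat_diff)
  have leaf: "real (join_degree (star_adj k) k ns i) = d i" if "2 \<le> i" "i \<le> k" for i
    using join_degree_star_leaf[OF that] that ns[of i] by (simp add: d_def of_nat_diff)
  have degree: "real (join_degree (star_adj k) k ns i) = d i" if "1 \<le> i" "i \<le> k" for i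
    using that center leaf by (cases "i = 1") auto
  have chi_eq: "chi (sombor_matrix n E) x =
      (\<Prod>i=1..k. (x + sqrt 2 * real (join_degree (star_adj k) k ns i)) ^ (ns i - 1)) *
      det (clique_join_quotient (star_adj k) k ns x)"
    unfolding n_def E_def block_offset_Suc_eq_sum[symmetric] using ns
    by (rule chi_sombor_gen_join_cliques)
  show ?thesis
    unfolding chi_eq det_clique_join_quotient_star
    by (intro arg_cong2[where f = "(*)"] arg_cong2[where f = "(-)"] prod.cong sum.cong refl)
      (use assms(1) in \<open>simp_all add: degree\<close>)
qed

end
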